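(* Let $L$ be a commutative C-loop and let $A$ be the subloop of $L$ generated by all associators $[x,y,z]$, $x,y,z\in L$. Then $a^2=e$ for every $a\in A$.
   Context: A C-loop is a loop satisfying $x(y(yz))=((xy)y)z$ for all $x,y,z$. The associator $[x,y,z]$ is the unique element $u$ with $(xy)z=(x(yz))u$. *)

theory Defs
  imports Main
begin

definition loop :: "('a \<Rightarrow> 'a \<Rightarrow> 'a) \<Rightarrow> 'a \<Rightarrow> bool" where
  "loop m e \<longleftrightarrow> (\<forall>x. m e x = x \<and> m x e = x)
     \<and> (\<forall>a b. \<exists>!x. m a x = b) \<and> (\<forall>a b. \<exists>!y. m y a = b)"

definition C_loop :: "('a \<Rightarrow> 'a \<Rightarrow> 'a) \<Rightarrow> 'a \<Rightarrow> bool" where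
  "C_loop m e \<longleftrightarrow> loop m e \<and>
     (\<forall>x y z. m x (m y (m y z)) = m (m (m x y) y) z)"

definition commutative_op :: "('a \<Rightarrow> 'a \<Rightarrow> 'a) \<Rightarrow> bool" where
  "commutative_op m \<longleftrightarrow> (\<forall>x y. m x y = m y x)"

definition ldiv :: "('a \<Rightarrow> 'a \<Rightarrow> 'a) \<Rightarrow> 'a \<Rightarrow> 'a \<Rightarrow> 'a" where
  "ldiv m a b = (THE x. m a x = b)"

definition rdiv :: "('a \<Rightarrow> 'a \<Rightarrow> 'a) \<Rightarrow> 'a \<Rightarrow> 'a \<Rightarrow> 'a" where
  "rdiv m b a = (THE y. m y a = b)"

definition associator :: "('a \<Rightarrow> 'a \<Rightarrow> 'a) \<Rightarrow> 'a \<Rightarrow> 'a \<Rightarrow> 'a \<Rightarrow> 'a" where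
  "associator m x y z = (THE u. m (m x y) z = m (m x (m y z)) u)"

definition subloop :: "('a \<Rightarrow> 'a \<Rightarrow> 'a) \<Rightarrow> 'a \<Rightarrow> 'a set \<Rightarrow> bool" where
  "subloop m e H \<longleftrightarrow> e \<in> H \<and> (\<forall>a\<in>H. \<forall>b\<in>H. m a b \<in> H \<and> ldiv m a b \<in> H \<and> rdiv m a b \<in> H)"

definition generated_subloop :: "('a \<Rightarrow> 'a \<Rightarrow> 'a) \<Rightarrow> 'a \<Rightarrow> 'a set \<Rightarrow> 'a set" where
  "generated_subloop m e S = \<Inter>{H. subloop m e H \<and> S \<subseteq> H}"

end

theory Submission
  imports Defs
begin

text \<open>In a C-loop the C-identity with \<open>x = e\<close> or \<open>z = e\<close> gives the two alternative laws,
  and together they place every square in the middle nucleus. In the commutative case this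
  makes squaring a homomorphism, \<open>(xy)\<^sup>2 = x\<^sup>2y\<^sup>2\<close>, so the elements of square \<open>e\<close> form a
  subloop. Squaring \<open>(xy)z = (x(yz))u\<close> gives \<open>(x\<^sup>2y\<^sup>2)z\<^sup>2 = (x\<^sup>2(y\<^sup>2z\<^sup>2))u\<^sup>2\<close>, and since
  squares associate with each other, cancellation yields \<open>u\<^sup>2 = e\<close> for every associator \<open>u\<close>.\<close>

lemma generated_subloop_subset:
  assumes "subloop m e H" and "S \<subseteq> H"
  shows "generated_subloop m e S \<subseteq> H"
  using assms unfolding generated_subloop_def by blast

locale loop_op =
  fixes mult :: "'a \<Rightarrow> 'a \<Rightarrow> 'a" (infixl \<open>\<cdot>\<close> 70) and e :: 'a
  assumes loop: "loop (\<cdot>) e"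
begin

lemma left_neutral [simp]: "e \<cdot> x = x"
  and right_neutral [simp]: "x \<cdot> e = x"
  using loop unfolding loop_def by auto

lemma left_cancel: "a \<cdot> x = a \<cdot> y \<Longrightarrow> x = y"
  using loop unfolding loop_def by metis

lemma right_cancel: "x \<cdot> a = y \<cdot> a \<Longrightarrow> x = y"
  using loop unfolding loop_def by metis

lemma ldiv_eqI: "a \<cdot> x = b \<Longrightarrow> ldiv (\<cdot>) a b = x"
  unfolding ldiv_def by (blast intro: left_cancel)

lemma rdiv_eqI: "y \<cdot> a = b \<Longrightarrow> rdiv (\<cdot>) b a = y"
  unfolding rdiv_def by (blast intro: right_cancel)

lemma associator_eq: "(x \<cdot> y) \<cdot> z = (x \<cdot> (y \<cdot> z)) \<cdot> associator (\<cdot>) x y z"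
proof -
  have "\<exists>!u. (x \<cdot> y) \<cdot> z = (x \<cdot> (y \<cdot> z)) \<cdot> u"
    using loop unfolding loop_def by metis
  then show ?thesis
    unfolding associator_def by (rule theI')
qed

end

locale C_loop_op = loop_op +
  assumes C_identity: "x \<cdot> (y \<cdot> (y \<cdot> z)) = ((x \<cdot> y) \<cdot> y) \<cdot> z"
begin

lemma left_alternative: "y \<cdot> (y \<cdot> z) = (y \<cdot> y) \<cdot> z"
  using C_identity [of e] by simp

lemma right_alternative: "(x \<cdot> y) \<cdot> y = x \<cdot> (y \<cdot> y)"
  using C_identity [of _ _ e] by simp

lemma square_middle_nucleus: "x \<cdot> ((y \<cdot> y) \<cdot> z) = (x \<cdot> (y \<cdot> y)) \<cdot> z"
  using C_identity [of x y z] by (simp add: left_alternative right_alternative)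

end

locale commutative_C_loop_op = C_loop_op +
  assumes commute: "x \<cdot> y = y \<cdot> x"
begin

lemma square_mult: "(x \<cdot> y) \<cdot> (x \<cdot> y) = (x \<cdot> x) \<cdot> (y \<cdot> y)"
proof (rule left_cancel [of x])
  have "x \<cdot> ((x \<cdot> y) \<cdot> (x \<cdot> y)) = (x \<cdot> (x \<cdot> y)) \<cdot> (x \<cdot> y)"
    by (rule right_alternative [symmetric])
  also have "\<dots> = (x \<cdot> y) \<cdot> (x \<cdot> (x \<cdot> y))"
    by (rule commute)
  also have "\<dots> = ((x \<cdot> y) \<cdot> (x \<cdot> x)) \<cdot> y"
    by (simp only: C_identity right_alternative)
  also have "\<dots> = ((x \<cdot> x) \<cdot> (x \<cdot> y)) \<cdot> y"
    by (simp only: commute [of "x \<cdot> y"])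
  also have "\<dots> = (((x \<cdot> x) \<cdot> x) \<cdot> y) \<cdot> y"
    by (simp only: left_alternative [symmetric] C_identity)
  also have "\<dots> = (x \<cdot> (x \<cdot> x)) \<cdot> (y \<cdot> y)"
    by (simp only: right_alternative commute [of "x \<cdot> x" x])
  also have "\<dots> = x \<cdot> ((x \<cdot> x) \<cdot> (y \<cdot> y))"
    by (rule square_middle_nucleus [symmetric])
  finally show "x \<cdot> ((x \<cdot> y) \<cdot> (x \<cdot> y)) = x \<cdot> ((x \<cdot> x) \<cdot> (y \<cdot> y))" .
qed

lemma subloop_square_eq_neutral: "subloop (\<cdot>) e {a. a \<cdot> a = e}"
  unfolding subloop_def
proof (intro conjI ballI)
  fix a b assume "a \<in> {a. a \<cdot> a = e}" and "b \<in> {a. a \<cdot> a = e}"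
  then have aa: "a \<cdot> a = e" and bb: "b \<cdot> b = e" by simp_all
  show ab: "a \<cdot> b \<in> {a. a \<cdot> a = e}"
    by (simp add: square_mult aa bb)
  have "ldiv (\<cdot>) a b = a \<cdot> b"
    by (rule ldiv_eqI) (simp add: left_alternative aa)
  with ab show "ldiv (\<cdot>) a b \<in> {a. a \<cdot> a = e}" by simp
  have "rdiv (\<cdot>) a b = a \<cdot> b"
    by (rule rdiv_eqI) (simp add: right_alternative bb)
  with ab show "rdiv (\<cdot>) a b \<in> {a. a \<cdot> a = e}" by simp
qed simp

lemma associator_square: "associator (\<cdot>) x y z \<cdot> associator (\<cdot>) x y z = e"
proof -
  define u where "u = associator (\<cdot>) x y z"
  have u: "(x \<cdot> y) \<cdot> z = (x \<cdot> (y \<cdot> z)) \<cdot> u"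
    unfolding u_def by (rule associator_eq)
  let ?x2 = "x \<cdot> x" and ?y2 = "y \<cdot> y" and ?z2 = "z \<cdot> z"
  have "(?x2 \<cdot> (?y2 \<cdot> ?z2)) \<cdot> e = (?x2 \<cdot> ?y2) \<cdot> ?z2"
    by (simp add: square_middle_nucleus)
  also have "\<dots> = ((x \<cdot> y) \<cdot> z) \<cdot> ((x \<cdot> y) \<cdot> z)"
    by (simp only: square_mult [of "x \<cdot> y" z] square_mult [of x y])
  also have "\<dots> = ((x \<cdot> (y \<cdot> z)) \<cdot> u) \<cdot> ((x \<cdot> (y \<cdot> z)) \<cdot> u)"
    by (simp only: u)
  also have "\<dots> = (?x2 \<cdot> (?y2 \<cdot> ?z2)) \<cdot> (u \<cdot> u)"
    by (simp only: square_mult [of "x \<cdot> (y \<cdot> z)" u] square_mult [of x "y \<cdot> z"]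
        square_mult [of y z])
  finally show ?thesis
    unfolding u_def by (rule left_cancel [symmetric])
qed

end

theorem corollary5p3:
  fixes m :: "'a \<Rightarrow> 'a \<Rightarrow> 'a" and e :: 'a
  assumes "C_loop m e" and "commutative_op m"
  shows "\<forall>a \<in> generated_subloop m e {associator m x y z | x y z. True}. m a a = e"
proof -
  interpret commutative_C_loop_op m e
    using assms unfolding C_loop_def commutative_op_def by unfold_locales blast+
  have "generated_subloop m e {associator m x y z | x y z. True} \<subseteq> {a. m a a = e}"
    using associator_square by (intro generated_subloop_subset subloop_square_eq_neutral) auto
  then show ?thesis by auto
qed

end
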